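(* In the comparison model (where letters can be accessed only through comparisons), every algorithm solving the witness s-cover testing problem requires $\Omega(n\log n)$ comparisons in the worst case on inputs where $S$ has length $n$.
   Context: For words $C,S$, $C$ is an \emph{s-cover} of $S$ if for every position $i$ of $S$ there exist indices $j_0<\dots<j_{|C|-1}$ with $S[j_t]=C[t]$ for all $t$ and $i\in\{j_0,\dots,j_{|C|-1}\}$. The \emph{witness s-cover testing problem}: given words $C$ and $S$, decide whether $C$ is an s-cover of $S$, and if so, output for every position $i$ of $S$ a position $j$ of $C$ such that some occurrence $j_0<\dots<j_{|C|-1}$ of $C$ as a subsequence of $S$ has $j_j=i$ (any such $j$ may be output). *)

theory Defs
  imports Complex_Main
begin

text \<open>Words are lists of letters; letters are natural numbers (an infinite linearly
ordered alphabet).  Positions are 0-based.\<close>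

definition occurrence :: "nat list \<Rightarrow> nat list \<Rightarrow> nat list \<Rightarrow> bool" where
  "occurrence C S js \<longleftrightarrow> length js = length C \<and> sorted_wrt (<) js \<and>
     (\<forall>t<length C. js ! t < length S \<and> S ! (js ! t) = C ! t)"

definition s_cover :: "nat list \<Rightarrow> nat list \<Rightarrow> bool" where
  "s_cover C S \<longleftrightarrow> (\<forall>i<length S. \<exists>js. occurrence C S js \<and> i \<in> set js)"

definition witness_ok :: "nat list \<Rightarrow> nat list \<Rightarrow> nat list \<Rightarrow> bool" where
  "witness_ok C S w \<longleftrightarrow> length w = length S \<and>
     (\<forall>i<length S. w ! i < length C \<and> (\<exists>js. occurrence C S js \<and> js ! (w ! i) = i))"

text \<open>Comparison model: an algorithm (for fixed input lengths) is a ternary decision tree.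
An inner node compares the letters at two positions (the boolean selects the word:
True = C, False = S) and branches on <, =, >.  A leaf outputs the answer:
None = "C is not an s-cover of S", Some w = "C is an s-cover, with witnesses w".\<close>
datatype dtree =
    Leaf "nat list option"
  | Cmp "bool \<times> nat" "bool \<times> nat" dtree dtree dtree

definition letter :: "nat list \<Rightarrow> nat list \<Rightarrow> bool \<times> nat \<Rightarrow> nat" where
  "letter C S p = (if fst p then C ! snd p else S ! snd p)"

definition valid_pos :: "nat list \<Rightarrow> nat list \<Rightarrow> bool \<times> nat \<Rightarrow> bool" where
  "valid_pos C S p \<longleftrightarrow> snd p < length (if fst p then C else S)"

text \<open>Comparisons involving an out-of-range position go to the middle branch (carry no
information about the input) but are still counted.\<close>
fun run :: "dtree \<Rightarrow> nat list \<Rightarrow> nat list \<Rightarrow> nat list option \<times> nat" where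
  "run (Leaf r) C S = (r, 0)"
| "run (Cmp p q t_lt t_eq t_gt) C S =
     (let (r, k) =
        (if valid_pos C S p \<and> valid_pos C S q then
           (if letter C S p < letter C S q then run t_lt C S
            else if letter C S p = letter C S q then run t_eq C S
            else run t_gt C S)
         else run t_eq C S)
      in (r, Suc k))"

definition solves_witness_scover :: "(nat \<Rightarrow> nat \<Rightarrow> dtree) \<Rightarrow> bool" where
  "solves_witness_scover A \<longleftrightarrow> (\<forall>C S.
     (case fst (run (A (length C) (length S)) C S) of
        None \<Rightarrow> \<not> s_cover C S
      | Some w \<Rightarrow> s_cover C S \<and> witness_ok C S w))"

definition comparisons :: "(nat \<Rightarrow> nat \<Rightarrow> dtree) \<Rightarrow> nat list \<Rightarrow> nat list \<Rightarrow> nat" where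
  "comparisons A C S = snd (run (A (length C) (length S)) C S)"

end

theory Submission imports Defs begin

text \<open>Take C = 0 1 ... k-1 and S = C T C with T an arbitrary word of length m over the
letters of C.  Every position of S lies on an occurrence of C (use the left copy of C
below it and the right copy above it), and since the letters of C are distinct the only
correct witness assignment is S itself.  So an algorithm must produce k^m different
outputs, and a ternary decision tree with that many leaves has depth at least
m log_3 k; with k, m proportional to n this is \<Omega>(n log n).\<close>

fun outputs_within :: "dtree \<Rightarrow> nat \<Rightarrow> nat list option set" where
  "outputs_within (Leaf r) d = {r}"
| "outputs_within (Cmp p q t_lt t_eq t_gt) 0 = {}"
| "outputs_within (Cmp p q t_lt t_eq t_gt) (Suc d) =
     outputs_within t_lt d \<union> outputs_within t_eq d \<union> outputs_within t_gt d"

lemma finite_outputs_within: "finite (outputs_within t d)"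
  by (induction t d rule: outputs_within.induct) auto

lemma card_outputs_within: "card (outputs_within t d) \<le> 3 ^ d"
proof (induction t d rule: outputs_within.induct)
  case (3 p q t_lt t_eq t_gt d)
  have "card (outputs_within t_lt d \<union> outputs_within t_eq d \<union> outputs_within t_gt d)
        \<le> card (outputs_within t_lt d) + card (outputs_within t_eq d) + card (outputs_within t_gt d)"
    by (meson add_mono card_Un_le le_trans order_refl)
  with "3.IH" show ?case by simp
qed simp_all

lemma run_in_outputs_within:
  "snd (run t C S) \<le> d \<Longrightarrow> fst (run t C S) \<in> outputs_within t d"
proof (induction t arbitrary: d)
  case (Cmp p q t_lt t_eq t_gt)
  then obtain d' where "d = Suc d'" by (cases d) (auto split: prod.splits)
  with Cmp show ?case by (auto split: prod.splits if_splits)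
qed simp

lemma exists_input_card_le_three_pow_comparisons:
  assumes "finite X" "X \<noteq> {}" and inj: "inj_on (\<lambda>x. fst (run t (C x) (S x))) X"
  obtains x where "x \<in> X" "card X \<le> 3 ^ snd (run t (C x) (S x))"
proof -
  define cost where "cost x = snd (run t (C x) (S x))" for x
  define d where "d = Max (cost ` X)"
  have "d \<in> cost ` X" unfolding d_def using assms(1,2) by simp
  then obtain x where x: "x \<in> X" "cost x = d" by auto
  have "(\<lambda>x. fst (run t (C x) (S x))) ` X \<subseteq> outputs_within t d"
    using assms(1) by (auto simp: d_def cost_def intro!: run_in_outputs_within)
  then have "card X \<le> card (outputs_within t d)"
    using card_inj_on_le[OF inj _ finite_outputs_within] by blast
  also have "\<dots> \<le> 3 ^ d" by (rule card_outputs_within)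
  finally show thesis using that x by (simp add: cost_def)
qed

definition padded :: "nat \<Rightarrow> nat list \<Rightarrow> nat list" where
  "padded k T = [0..<k] @ T @ [0..<k]"

lemma occurrence_through_position:
  assumes i: "i < length (padded k T)" and a: "padded k T ! i = a" "a < k"
  shows "occurrence [0..<k] (padded k T)
           (map (\<lambda>j. if j < a then j else if j = a then i else k + length T + j) [0..<k])"
proof -
  let ?m = "length T"
  have "a \<le> i \<and> i \<le> k + ?m + a"
  proof (cases "i < k + ?m")
    case True
    then show ?thesis using a by (cases "i < k") (auto simp: padded_def nth_append)
  next
    case False
    then show ?thesis using i a by (auto simp: padded_def nth_append)
  qed
  then show ?thesis
    using i a by (auto simp: occurrence_def padded_def nth_append sorted_wrt_iff_nth_less)
qed

lemma s_cover_padded: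
  assumes "set T \<subseteq> {0..<k}"
  shows "s_cover [0..<k] (padded k T)"
  unfolding s_cover_def
proof (intro allI impI)
  fix i assume i: "i < length (padded k T)"
  then have "padded k T ! i < k"
    using assms nth_mem[OF i] by (auto simp: padded_def)
  with occurrence_through_position[OF i refl this]
  show "\<exists>js. occurrence [0..<k] (padded k T) js \<and> i \<in> set js"
    by (intro exI[of _ "map _ [0..<k]"]) force
qed

lemma witness_ok_upt_imp_eq:
  assumes "witness_ok [0..<k] S w" shows "w = S"
proof (rule nth_equalityI)
  show "length w = length S" using assms by (simp add: witness_ok_def)
  fix i assume "i < length w"
  with assms obtain js where "occurrence [0..<k] S js" "js ! (w ! i) = i" "w ! i < k"
    by (auto simp: witness_ok_def)
  then show "w ! i = S ! i" unfolding occurrence_def by force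
qed

lemma run_padded_eq_Some:
  assumes "solves_witness_scover A" "set T \<subseteq> {0..<k}"
  shows "fst (run (A k (length (padded k T))) [0..<k] (padded k T)) = Some (padded k T)"
proof -
  have "case fst (run (A k (length (padded k T))) [0..<k] (padded k T)) of
          None \<Rightarrow> \<not> s_cover [0..<k] (padded k T)
        | Some w \<Rightarrow> s_cover [0..<k] (padded k T) \<and> witness_ok [0..<k] (padded k T) w"
    using assms(1) unfolding solves_witness_scover_def by (metis length_upt minus_nat.diff_0)
  then show ?thesis
    using s_cover_padded[OF assms(2)] witness_ok_upt_imp_eq by (auto split: option.splits)
qed

lemma n_ln_n_le_of_pow_le:
  fixes n d :: nat
  assumes n: "12 \<le> n" and pow: "(n div 3) ^ (n - 2 * (n div 3)) \<le> 3 ^ d"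
  shows "1/12 * real n * ln (real n) \<le> real d"
proof -
  define k where "k = n div 3"
  define m where "m = n - 2 * k"
  have k: "4 \<le> k" "n \<le> 4 * k" and m: "real n \<le> 3 * real m"
    using n by (auto simp: k_def m_def)
  have "real m * ln (real k) = ln (real (k ^ m))"
    using k by (simp add: ln_realpow)
  also have "\<dots> \<le> ln (real (3 ^ d))"
    using pow k by (simp add: k_def m_def del: of_nat_power)
  also have "\<dots> = real d * ln 3" by (simp add: ln_realpow)
  also have "\<dots> \<le> real d * 2"
    using ln_le_minus_one[of 3] by (intro mult_left_mono) auto
  finally have m_ln_k: "real m * ln (real k) \<le> 2 * real d" by simp
  have "n \<le> k * k" using k by (metis le_trans mult_le_mono1)
  then have "ln (real n) \<le> ln (real k * real k)"
    using n k by (subst ln_le_cancel_iff) (auto simp del: of_nat_mult simp: of_nat_mult[symmetric])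
  also have "\<dots> = 2 * ln (real k)" using k by (simp add: ln_mult)
  finally have "real n * ln (real n) \<le> (3 * real m) * (2 * ln (real k))"
    using m n by (intro mult_mono) auto
  with m_ln_k show ?thesis by simp
qed

theorem mainTheorem14:
  shows "\<exists>c>0. \<exists>N. \<forall>A. solves_witness_scover A \<longrightarrow>
           (\<forall>n\<ge>N. \<exists>C S. length S = n \<and> real (comparisons A C S) \<ge> c * real n * ln (real n))"
proof (intro exI[of _ "1/12"] conjI exI[of _ "12::nat"] allI impI)
  fix A n assume sol: "solves_witness_scover A" and n: "12 \<le> (n::nat)"
  define k where "k = n div 3"
  define m where "m = n - 2 * k"
  define X where "X = {T. set T \<subseteq> {0..<k} \<and> length T = m}"
  have len: "length (padded k T) = n" if "T \<in> X" for T
    using that n by (auto simp: X_def padded_def k_def m_def)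
  have out: "fst (run (A k n) [0..<k] (padded k T)) = Some (padded k T)" if "T \<in> X" for T
    using run_padded_eq_Some[OF sol, of T k] len[OF that] that by (simp add: X_def)
  have "finite X" unfolding X_def by (rule finite_lists_length_eq) simp
  moreover have "replicate m 0 \<in> X" using n by (auto simp: X_def k_def)
  moreover have "inj_on (\<lambda>T. fst (run (A k n) [0..<k] (padded k T))) X"
    by (rule inj_onI) (auto dest!: out simp: padded_def)
  ultimately obtain T where T: "T \<in> X" "card X \<le> 3 ^ comparisons A [0..<k] (padded k T)"
    using len by (auto simp: comparisons_def
        elim: exists_input_card_le_three_pow_comparisons[of X "A k n" "\<lambda>_. [0..<k]" "padded k"])
  moreover have "card X = k ^ m" unfolding X_def by (subst card_lists_length_eq) simp_all
  ultimately have "1/12 * real n * ln (real n) \<le> real (comparisons A [0..<k] (padded k T))"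
    using n_ln_n_le_of_pow_le[OF n] by (simp add: k_def m_def)
  with len[OF T(1)] show "\<exists>C S. length S = n \<and> 1/12 * real n * ln (real n) \<le> real (comparisons A C S)"
    by blast
qed simp

end
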